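(* Let $u=q/p$ and $v=s/r$ be positive rational numbers written in lowest terms, and let $\mathcal{T}_{u,v}$ be the triangle with vertices $(0,0)$, $(p/q,0)$ and $(0,r/s)$. If \[ s\mid p,\quad p\mid (rq+1),\quad \gcd\!\left(\frac{rq+1}{p},s\right)=1 \] and \[ q\mid r,\quad r\mid (sp+1),\quad \gcd\!\left(\frac{sp+1}{r},q\right)=1, \] then $\mathcal{T}_{u,v}$ is pseudo-integral, i.e. $t\mapsto \#(t\mathcal{T}_{u,v}\cap\mathbb{Z}^2)$ is a polynomial in the positive integer $t$. *)

theory Defs
  imports "HOL-Analysis.Analysis" "HOL-Computational_Algebra.Polynomial"
begin

definition triangle_T :: "nat \<Rightarrow> nat \<Rightarrow> nat \<Rightarrow> nat \<Rightarrow> (real \<times> real) set" where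
  "triangle_T p q r s = convex hull {(0, 0), (real p / real q, 0), (0, real r / real s)}"

definition lattice_count :: "(real \<times> real) set \<Rightarrow> nat \<Rightarrow> nat" where
  "lattice_count P t = card {z :: int \<times> int. (real_of_int (fst z), real_of_int (snd z)) \<in> (\<lambda>x. real t *\<^sub>R x) ` P}"

definition pseudo_integral :: "(real \<times> real) set \<Rightarrow> bool" where
  "pseudo_integral P \<longleftrightarrow> (\<exists>f :: real poly. \<forall>t::nat. t > 0 \<longrightarrow> real (lattice_count P t) = poly f (real t))"

end

theory Submission
  imports Defs "HOL-Number_Theory.Cong"
begin

text \<open>
  With \<open>A = qr\<close>, \<open>B = sp\<close>, \<open>C = pr\<close>, the lattice points of \<open>t\<cdot>T\<close> are the \<open>(x, y) \<in> \<nat>\<^sup>2\<close> with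
  \<open>Ax + By \<le> tC\<close>. Their number \<open>F(N)\<close> for the bound \<open>N\<close> satisfies
  \<open>F(N + A) = F(N) + \<lfloor>(N + A)/B\<rfloor> + 1\<close>, so the defect \<open>D(N)\<close> of \<open>2AB F(N)\<close> from the quadratic
  \<open>N\<^sup>2 + (A + B + 1)N + 2AB\<close> changes by \<open>A(B - 1 - 2((N + A) mod B))\<close> per step. When \<open>p\<close> divides \<open>N\<close>,
  the hypotheses on \<open>p, q, r, s\<close> force the residues met in the next \<open>p\<close> steps to average exactly
  \<open>(B - 1)/2\<close>, so \<open>D(N + pA) = D(N)\<close>, i.e. \<open>D\<close> restricted to multiples of \<open>C\<close> has period \<open>q\<close>;
  by the symmetric argument it also has period \<open>s\<close>. As \<open>q\<close> and \<open>s\<close> are coprime, \<open>D(tC) = D(0) = 0\<close>.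
\<close>

definition points_below :: "nat \<Rightarrow> nat \<Rightarrow> nat \<Rightarrow> nat" where
  "points_below A B N = card {(x :: nat, y :: nat). A * x + B * y \<le> N}"

lemma convex_hull_right_triangle_param:
  fixes a b :: real
  shows "convex hull {(0, 0), (a, 0), (0, b)} = {(u * a, v * b) | u v. 0 \<le> u \<and> 0 \<le> v \<and> u + v \<le> 1}"
  unfolding convex_hull_3_alt by (simp add: scaleR_prod_def zero_prod_def)

lemma convex_hull_right_triangle:
  fixes a b :: real
  assumes "a > 0" "b > 0"
  shows "convex hull {(0, 0), (a, 0), (0, b)} = {(x, y). 0 \<le> x \<and> 0 \<le> y \<and> b * x + a * y \<le> a * b}"
proof (rule set_eqI, clarify)
  fix x y :: real
  have iff: "(\<exists>u v. (x, y) = (u * a, v * b) \<and> 0 \<le> u \<and> 0 \<le> v \<and> u + v \<le> 1)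
      \<longleftrightarrow> 0 \<le> x \<and> 0 \<le> y \<and> b * x + a * y \<le> a * b"
  proof
    assume "\<exists>u v. (x, y) = (u * a, v * b) \<and> 0 \<le> u \<and> 0 \<le> v \<and> u + v \<le> 1"
    then obtain u v where "x = u * a" "y = v * b" "0 \<le> u" "0 \<le> v" "u + v \<le> 1"
      by auto
    moreover have "b * x + a * y = a * b * (u + v)"
      using \<open>x = u * a\<close> \<open>y = v * b\<close> by (simp add: algebra_simps)
    ultimately show "0 \<le> x \<and> 0 \<le> y \<and> b * x + a * y \<le> a * b"
      using assms by (simp add: mult_left_le)
  next
    assume h: "0 \<le> x \<and> 0 \<le> y \<and> b * x + a * y \<le> a * b"
    have "x / a + y / b \<le> 1"
      using h assms by (simp add: field_simps)
    then show "\<exists>u v. (x, y) = (u * a, v * b) \<and> 0 \<le> u \<and> 0 \<le> v \<and> u + v \<le> 1"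
      using h assms by (intro exI[of _ "x / a"] exI[of _ "y / b"]) simp
  qed
  then show "(x, y) \<in> convex hull {(0, 0), (a, 0), (0, b)} \<longleftrightarrow> (x, y) \<in> {(x, y). 0 \<le> x \<and> 0 \<le> y \<and> b * x + a * y \<le> a * b}"
    unfolding convex_hull_right_triangle_param using iff by blast
qed

lemma scaleR_convex_hull_right_triangle:
  fixes a b c :: real
  assumes "a > 0" "b > 0" "c > 0"
  shows "(\<lambda>z. c *\<^sub>R z) ` (convex hull {(0, 0), (a, 0), (0, b)})
    = {(x, y). 0 \<le> x \<and> 0 \<le> y \<and> b * x + a * y \<le> c * (a * b)}"
proof -
  have "(\<lambda>z. c *\<^sub>R z) ` (convex hull {(0, 0), (a, 0), (0, b)}) = convex hull {(0, 0), (c * a, 0), (0, c * b)}"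
    using convex_hull_scaling[of c "{(0, 0), (a, 0), (0, b)}"] by simp
  also have "\<dots> = {(x, y). 0 \<le> x \<and> 0 \<le> y \<and> (c * b) * x + (c * a) * y \<le> (c * a) * (c * b)}"
    using assms by (simp add: convex_hull_right_triangle)
  also have "\<dots> = {(x, y). 0 \<le> x \<and> 0 \<le> y \<and> b * x + a * y \<le> c * (a * b)}"
  proof -
    have "(c * b) * x + (c * a) * y \<le> (c * a) * (c * b) \<longleftrightarrow> c * (b * x + a * y) \<le> c * (c * (a * b))" for x y
      by (simp add: algebra_simps)
    then show ?thesis
      using mult_le_cancel_left_pos[OF assms(3)] by presburger
  qed
  finally show ?thesis .
qed

lemma scaled_triangle_T_int_point_iff:
  fixes x y :: int
  assumes "p > 0" "q > 0" "r > 0" "s > 0" "t > 0"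
  shows "(real_of_int x, real_of_int y) \<in> (\<lambda>z. real t *\<^sub>R z) ` triangle_T p q r s
    \<longleftrightarrow> 0 \<le> x \<and> 0 \<le> y \<and> int (q * r) * x + int (s * p) * y \<le> int (t * (p * r))"
proof -
  have "(real_of_int x, real_of_int y) \<in> (\<lambda>z. real t *\<^sub>R z) ` triangle_T p q r s
      \<longleftrightarrow> 0 \<le> x \<and> 0 \<le> y \<and> real r / real s * x + real p / real q * y \<le> real t * (real p / real q * (real r / real s))"
    unfolding triangle_T_def using assms by (simp add: scaleR_convex_hull_right_triangle)
  also have "\<dots> \<longleftrightarrow> 0 \<le> x \<and> 0 \<le> y \<and> q * r * x + s * p * y \<le> t * (p * r)"
  proof -
    have "real r / real s * x + real p / real q * y = real_of_int (q * r * x + s * p * y) / (real q * real s)"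
      "real t * (real p / real q * (real r / real s)) = real_of_int (t * (p * r)) / (real q * real s)"
      using assms by (simp_all add: field_simps)
    moreover have "real q * real s > 0"
      using assms by simp
    ultimately have "real r / real s * x + real p / real q * y \<le> real t * (real p / real q * (real r / real s))
        \<longleftrightarrow> real_of_int (q * r * x + s * p * y) \<le> real_of_int (t * (p * r))"
      by (simp add: divide_le_cancel)
    then show ?thesis
      by (simp only: of_int_le_iff)
  qed
  finally show ?thesis .
qed

lemma card_nonneg_int_points_below:
  "card {z :: int \<times> int. 0 \<le> fst z \<and> 0 \<le> snd z \<and> A * fst z + B * snd z \<le> N} = points_below A B N"
proof -
  let ?S = "{(x :: nat, y :: nat). A * x + B * y \<le> N}"
  have "{z :: int \<times> int. 0 \<le> fst z \<and> 0 \<le> snd z \<and> A * fst z + B * snd z \<le> N} = (\<lambda>(x, y). (int x, int y)) ` ?S"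
  proof (rule set_eqI, clarify)
    fix x y :: int
    show "(x, y) \<in> {z. 0 \<le> fst z \<and> 0 \<le> snd z \<and> A * fst z + B * snd z \<le> N} \<longleftrightarrow> (x, y) \<in> (\<lambda>(x, y). (int x, int y)) ` ?S"
    proof
      assume h: "(x, y) \<in> {z. 0 \<le> fst z \<and> 0 \<le> snd z \<and> A * fst z + B * snd z \<le> N}"
      then have "int (A * nat x + B * nat y) \<le> int N"
        by simp
      then have "(nat x, nat y) \<in> ?S"
        by (simp only: of_nat_le_iff) simp
      moreover have "(x, y) = (int (nat x), int (nat y))"
        using h by simp
      ultimately show "(x, y) \<in> (\<lambda>(x, y). (int x, int y)) ` ?S"
        by (metis (no_types, lifting) case_prod_conv image_eqI)
    next
      assume "(x, y) \<in> (\<lambda>(x, y). (int x, int y)) ` ?S"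
      then obtain a b where "x = int a" "y = int b" "A * a + B * b \<le> N"
        by auto
      then show "(x, y) \<in> {z. 0 \<le> fst z \<and> 0 \<le> snd z \<and> A * fst z + B * snd z \<le> N}"
        using of_nat_le_iff[of "A * a + B * b" N, where 'a = int] by simp
    qed
  qed
  moreover have "inj_on (\<lambda>(x :: nat, y :: nat). (int x, int y)) ?S"
    by (auto simp: inj_on_def)
  ultimately show ?thesis
    unfolding points_below_def by (simp add: card_image)
qed

lemma lattice_count_triangle_T:
  assumes "p > 0" "q > 0" "r > 0" "s > 0" "t > 0"
  shows "lattice_count (triangle_T p q r s) t = points_below (q * r) (s * p) (t * (p * r))"
proof -
  have "{z :: int \<times> int. (real_of_int (fst z), real_of_int (snd z)) \<in> (\<lambda>z. real t *\<^sub>R z) ` triangle_T p q r s}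
      = {z. 0 \<le> fst z \<and> 0 \<le> snd z \<and> int (q * r) * fst z + int (s * p) * snd z \<le> int (t * (p * r))}"
    using scaled_triangle_T_int_point_iff[OF assms] by simp
  then show ?thesis
    unfolding lattice_count_def using card_nonneg_int_points_below[of "q * r" "s * p" "t * (p * r)"] by simp
qed

lemma finite_points_below:
  assumes "A > 0" "B > 0"
  shows "finite {(x :: nat, y :: nat). A * x + B * y \<le> N}"
proof -
  have "x \<le> N \<and> y \<le> N" if "A * x + B * y \<le> N" for x y
  proof -
    have "x \<le> A * x" "y \<le> B * y"
      using assms by simp_all
    with that show ?thesis
      by linarith
  qed
  then have "{(x, y). A * x + B * y \<le> N} \<subseteq> {..N} \<times> {..N}"
    by blast
  then show ?thesis
    by (rule finite_subset) simp
qed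

lemma points_below_commute: "points_below A B N = points_below B A N"
proof -
  have "{(x, y). B * x + A * y \<le> N} = prod.swap ` {(x :: nat, y :: nat). A * x + B * y \<le> N}"
    by (auto simp: image_iff add.commute)
  then show ?thesis
    unfolding points_below_def by (simp add: card_image)
qed

lemma points_below_0:
  assumes "A > 0" "B > 0"
  shows "points_below A B 0 = 1"
proof -
  have "{(x :: nat, y :: nat). A * x + B * y \<le> 0} = {(0, 0)}"
    using assms by auto
  then show ?thesis
    unfolding points_below_def by simp
qed

lemma points_below_add:
  assumes "A > 0" "B > 0"
  shows "points_below A B (N + A) = points_below A B N + (N + A) div B + 1"
proof -
  let ?L = "(\<lambda>y. (0, y)) ` {..(N + A) div B}"
  let ?R = "(\<lambda>(x, y). (Suc x, y)) ` {(x :: nat, y :: nat). A * x + B * y \<le> N}"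
  have split: "{(x :: nat, y :: nat). A * x + B * y \<le> N + A} = ?L \<union> ?R"
  proof (rule set_eqI, clarify)
    fix x y :: nat
    show "(x, y) \<in> {(x, y). A * x + B * y \<le> N + A} \<longleftrightarrow> (x, y) \<in> ?L \<union> ?R"
      using assms by (cases x) (auto simp: image_iff less_eq_div_iff_mult_less_eq mult.commute)
  qed
  have "card ?L = (N + A) div B + 1"
    by (subst card_image) (auto simp: inj_on_def)
  moreover have "card ?R = points_below A B N"
    unfolding points_below_def by (subst card_image) (auto simp: inj_on_def)
  ultimately show ?thesis
    unfolding points_below_def split using finite_points_below[OF assms, of N]
    by (subst card_Un_disjoint) auto
qed

definition discrepancy :: "nat \<Rightarrow> nat \<Rightarrow> nat \<Rightarrow> int" where
  "discrepancy A B N =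
     2 * int A * int B * int (points_below A B N) - int N * (int N + int A + int B + 1) - 2 * int A * int B"

lemma points_below_eq_quadratic:
  assumes "A > 0" "B > 0" "discrepancy A B N = 0"
  shows "real (points_below A B N) =
    (real N ^ 2 + real N * (real A + real B + 1)) / (2 * real A * real B) + 1"
proof -
  have "2 * real A * real B * real (points_below A B N)
      = real N ^ 2 + real N * (real A + real B + 1) + 2 * real A * real B"
    using arg_cong[OF assms(3), of real_of_int]
    unfolding discrepancy_def by (simp add: algebra_simps power2_eq_square)
  then show ?thesis
    using assms(1,2) by (simp add: field_simps)
qed

lemma discrepancy_commute: "discrepancy A B N = discrepancy B A N"
  by (simp add: discrepancy_def points_below_commute[of A B] algebra_simps)

lemma discrepancy_add:
  assumes "A > 0" "B > 0"
  shows "discrepancy A B (N + A) = discrepancy A B N + int A * (int B - 1 - 2 * int ((N + A) mod B))"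
proof -
  define d m where "d = (N + A) div B" and "m = (N + A) mod B"
  have N: "int N = int B * int d + int m - int A"
    unfolding d_def m_def by (metis add_diff_cancel_right' div_mult_mod_eq mult.commute of_nat_add of_nat_mult)
  show ?thesis
    unfolding discrepancy_def points_below_add[OF assms] d_def[symmetric] m_def[symmetric]
    by (simp add: N algebra_simps)
qed

lemma discrepancy_add_mult:
  assumes "A > 0" "B > 0"
  shows "discrepancy A B (N + n * A)
    = discrepancy A B N + int A * (\<Sum>u = 1..n. int B - 1 - 2 * int ((N + u * A) mod B))"
proof (induction n)
  case (Suc n)
  then show ?case
    using discrepancy_add[OF assms, of "N + n * A"] by (simp add: add.assoc algebra_simps)
qed simp

lemma sum_lessThan_add: "(\<Sum>i < m + n. f i) = (\<Sum>i < m. f i) + (\<Sum>i < n. f (m + i :: nat))"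
  by (induction n) (simp_all add: add.assoc)

lemma double_sum_lessThan: "2 * (\<Sum>i < n. i) = n * (n - 1 :: nat)"
  by (induction n) (auto simp: algebra_simps)

lemma sum_mod_progression_eq_sum_lessThan:
  fixes c k s :: nat
  assumes "coprime k s"
  shows "(\<Sum>i < s. (c + i * k) mod s) = (\<Sum>j < s. j)"
proof (cases "s = 0")
  case False
  let ?h = "\<lambda>i. (c + i * k) mod s"
  have "inj_on ?h {..<s}"
  proof (rule inj_onI)
    fix i j assume "i \<in> {..<s}" "j \<in> {..<s}" "?h i = ?h j"
    then show "i = j"
      using cong_mult_rcancel_nat[of k s i j] assms
      by (simp add: cong_def[symmetric] cong_add_lcancel_nat coprime_commute cong_less_modulus_unique_nat)
  qed
  moreover from False have "?h ` {..<s} \<subseteq> {..<s}"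
    by auto
  ultimately have "?h ` {..<s} = {..<s}" and "inj_on ?h {..<s}"
    using endo_inj_surj[of "{..<s}" ?h] by auto
  then show ?thesis
    using sum.reindex[of ?h "{..<s}" id] by simp
qed simp

lemma double_sum_mod_progression:
  fixes c k s n :: nat
  assumes "coprime k s" "s dvd n"
  shows "2 * (\<Sum>i < n. (c + i * k) mod s) = n * (s - 1)"
proof -
  obtain a where "n = s * a"
    using assms(2) by blast
  moreover have "2 * (\<Sum>i < s * a. (c + i * k) mod s) = s * a * (s - 1)"
  proof (induction a)
    case (Suc a)
    have "(c + (s * a + j) * k) mod s = (c + j * k) mod s" for j
    proof -
      have "c + (s * a + j) * k = (c + j * k) + s * (a * k)"
        by (simp add: algebra_simps)
      then show ?thesis
        by (simp only: mod_mult_self2)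
    qed
    then have "(\<Sum>j < s. (c + (s * a + j) * k) mod s) = (\<Sum>j < s. j)"
      using sum_mod_progression_eq_sum_lessThan[OF assms(1)] by simp
    moreover have "(\<Sum>i < s * Suc a. (c + i * k) mod s)
        = (\<Sum>i < s * a. (c + i * k) mod s) + (\<Sum>j < s. (c + (s * a + j) * k) mod s)"
      using sum_lessThan_add[of "\<lambda>i. (c + i * k) mod s" "s * a" s] by (simp add: add.commute)
    ultimately show ?case
      using Suc double_sum_lessThan[of s] by (simp add: algebra_simps)
  qed simp
  ultimately show ?thesis by simp
qed

lemma mod_mult_add_less:
  fixes e p x s :: nat
  assumes "e < p"
  shows "(p * x + e) mod (s * p) = p * (x mod s) + e"
  using assms by (simp add: mod_mult2_eq mult.commute)

lemma double_sum_mod_shifted_progression: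
  fixes A N k p s :: nat
  assumes "A + 1 = k * p" "s dvd p" "coprime k s" "p dvd N"
  shows "2 * (\<Sum>u = 1..p. (N + u * A) mod (s * p)) = p * (s * p - 1)"
proof -
  obtain n where N: "N = p * n"
    using assms(4) by blast
  have "p > 0" "s > 0"
    using assms(1,2) by (auto intro: Nat.gr0I)
  obtain k' where k: "k = Suc k'"
    using assms(1) by (cases k) auto
  define c where "c = n + k'"
  \<comment> \<open>Modulo \<open>p\<close> the terms run down through \<open>p - 1, \<dots>, 0\<close>; their quotients by \<open>p\<close> form the progression \<open>c + i k\<close>.\<close>
  have term_eq: "(N + Suc i * A) mod (s * p) = p * ((c + i * k) mod s) + (p - Suc i)" if "i < p" for i
  proof -
    have A: "int A = (1 + int k') * int p - 1"
      using arg_cong[OF assms(1), of int] k by (simp add: algebra_simps)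
    have "int (N + Suc i * A) = int (p * (c + i * k) + (p - Suc i))"
      using that unfolding N c_def k by (simp add: A of_nat_diff algebra_simps)
    then have "N + Suc i * A = p * (c + i * k) + (p - Suc i)"
      by (simp only: of_nat_eq_iff)
    then show ?thesis
      using mod_mult_add_less[of "p - Suc i" p] that by simp
  qed
  have "(\<Sum>u = 1..p. (N + u * A) mod (s * p)) = (\<Sum>i < p. (N + Suc i * A) mod (s * p))"
    by (simp add: sum.atLeast1_atMost_eq)
  also have "\<dots> = (\<Sum>i < p. p * ((c + i * k) mod s) + (p - Suc i))"
    by (rule sum.cong[OF refl], rule term_eq) simp
  also have "\<dots> = p * (\<Sum>i < p. (c + i * k) mod s) + (\<Sum>i < p. p - Suc i)"
    by (simp only: sum.distrib sum_distrib_left)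
  also have "\<dots> = p * (\<Sum>i < p. (c + i * k) mod s) + (\<Sum>i < p. i)"
    using sum.nat_diff_reindex[of id p] by simp
  finally have "2 * (\<Sum>u = 1..p. (N + u * A) mod (s * p))
      = p * (2 * (\<Sum>i < p. (c + i * k) mod s)) + 2 * (\<Sum>i < p. i)"
    by (simp only: distrib_left mult.left_commute[of 2 p])
  also have "\<dots> = p * (p * (s - 1)) + p * (p - 1)"
    unfolding double_sum_mod_progression[OF assms(3,2)] double_sum_lessThan ..
  also have "\<dots> = p * (s * p - 1)"
    using \<open>p > 0\<close> \<open>s > 0\<close> by (cases s; cases p) (simp_all add: algebra_simps)
  finally show ?thesis .
qed

lemma discrepancy_add_period:
  fixes A N k p s :: nat
  assumes "A > 0" "A + 1 = k * p" "s dvd p" "coprime k s" "p dvd N"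
  shows "discrepancy A (s * p) (N + p * A) = discrepancy A (s * p) N"
proof -
  have "s * p > 0"
    using assms(2,3) by (auto intro: Nat.gr0I)
  define R where "R = (\<Sum>u = 1..p. (N + u * A) mod (s * p))"
  have "int (2 * R) = int (p * (s * p - 1))"
    using double_sum_mod_shifted_progression[OF assms(2-5)] unfolding R_def by simp
  then have "2 * int R = int p * (int (s * p) - 1)"
    using \<open>s * p > 0\<close> by (simp add: of_nat_diff)
  then have "(\<Sum>u = 1..p. int (s * p) - 1 - 2 * int ((N + u * A) mod (s * p))) = 0"
    unfolding R_def by (simp add: sum_subtractf sum_distrib_left)
  then show ?thesis
    using discrepancy_add_mult[OF assms(1) \<open>s * p > 0\<close>, of N p] by simp
qed

lemma periodic_add_mult:
  assumes "\<And>n. g (n + a) = g n"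
  shows "g (n + i * a) = g (n :: nat)"
proof (induction i)
  case (Suc i)
  have "n + Suc i * a = (n + i * a) + a"
    by simp
  then show ?case
    using Suc assms by metis
qed simp

lemma periodic_coprime_const:
  fixes g :: "nat \<Rightarrow> 'a"
  assumes "coprime a b" "\<And>n. g (n + a) = g n" "\<And>n. g (n + b) = g n"
  shows "g n = g 0"
proof (cases "a = 0")
  case True
  with assms(1) have "b = 1"
    by simp
  then show ?thesis
    using periodic_add_mult[of g b 0 n, OF assms(3)] by simp
next
  case False
  then obtain x y where "a * x = b * y + 1"
    using bezout_nat[of a b] assms(1) by (auto simp: coprime_iff_gcd_eq_1)
  then have "n * (a * x) = n * (b * y + 1)"
    by simp
  then have shift: "n + (n * y) * b = 0 + (n * x) * a"
    by (simp add: algebra_simps)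
  have "g n = g (n + (n * y) * b)"
    using periodic_add_mult[where g = g and a = b and n = n and i = "n * y", OF assms(3)] by simp
  also have "\<dots> = g 0"
    unfolding shift by (rule periodic_add_mult[where g = g and a = a, OF assms(2)])
  finally show ?thesis .
qed

lemma discrepancy_triangle_multiple_eq_0:
  fixes p q r s t :: nat
  assumes "coprime s r" "s dvd p" "p dvd r * q + 1" "coprime ((r * q + 1) div p) s"
    and "q dvd r" "r dvd s * p + 1" "coprime ((s * p + 1) div r) q"
  shows "discrepancy (q * r) (s * p) (t * (p * r)) = 0"
proof -
  have "p > 0" "r > 0"
    using assms(3,6) by (auto intro: Nat.gr0I)
  then have "q > 0" "s > 0"
    using assms(2,5) dvd_pos_nat by blast+
  define g where "g t = discrepancy (q * r) (s * p) (t * (p * r))" for t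
  have "g (t + q) = g t" for t
  proof -
    have "q * r + 1 = (r * q + 1) div p * p"
      using assms(3) by (simp add: mult.commute)
    then have "discrepancy (q * r) (s * p) (t * (p * r) + p * (q * r)) = g t"
      unfolding g_def using discrepancy_add_period[OF _ _ assms(2,4)] \<open>q > 0\<close> \<open>r > 0\<close> by simp
    then show ?thesis
      unfolding g_def by (simp add: algebra_simps)
  qed
  moreover have "g (t + s) = g t" for t
  proof -
    have "s * p + 1 = (s * p + 1) div r * r"
      using assms(6) by simp
    then have "discrepancy (s * p) (q * r) (t * (p * r) + r * (s * p)) = discrepancy (s * p) (q * r) (t * (p * r))"
      using discrepancy_add_period[OF _ _ assms(5,7)] \<open>s > 0\<close> \<open>p > 0\<close> by simp
    then show ?thesis
      unfolding g_def by (simp add: discrepancy_commute[of "q * r"] algebra_simps)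
  qed
  moreover have "coprime q s"
    using assms(1,5) by (metis coprime_commute coprime_mult_right_iff dvd_def)
  moreover have "g 0 = 0"
    unfolding g_def discrepancy_def using points_below_0 \<open>p > 0\<close> \<open>q > 0\<close> \<open>r > 0\<close> \<open>s > 0\<close> by simp
  ultimately show ?thesis
    using periodic_coprime_const[of q s g t] unfolding g_def by metis
qed

theorem corollary1p5:
  fixes p q r s :: nat
  assumes "p > 0" and "q > 0" and "r > 0" and "s > 0"
    and "coprime q p" and "coprime s r"
    and "s dvd p" and "p dvd (r * q + 1)" and "gcd ((r * q + 1) div p) s = 1"
    and "q dvd r" and "r dvd (s * p + 1)" and "gcd ((s * p + 1) div r) q = 1"
  shows "pseudo_integral (triangle_T p q r s)"
proof -
  define A B C where "A = q * r" and "B = s * p" and "C = p * r"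
  have "A > 0" "B > 0"
    using assms(1-4) unfolding A_def B_def by simp_all
  have "real (lattice_count (triangle_T p q r s) t)
      = poly [:1, real C * (real A + real B + 1) / (2 * real A * real B), real C ^ 2 / (2 * real A * real B):] (real t)"
    if "t > 0" for t
  proof -
    have "discrepancy A B (t * C) = 0"
      unfolding A_def B_def C_def using assms(6-12)
      by (intro discrepancy_triangle_multiple_eq_0) (simp_all add: coprime_iff_gcd_eq_1)
    then have "real (points_below A B (t * C)) = (real (t * C) ^ 2 + real (t * C) * (real A + real B + 1)) / (2 * real A * real B) + 1"
      using points_below_eq_quadratic \<open>A > 0\<close> \<open>B > 0\<close> by blast
    then show ?thesis
      using lattice_count_triangle_T[OF assms(1-4) that] \<open>A > 0\<close> \<open>B > 0\<close>
      unfolding A_def[symmetric] B_def[symmetric] C_def[symmetric]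
      by (simp add: field_simps power2_eq_square)
  qed
  then show ?thesis
    unfolding pseudo_integral_def by blast
qed

end
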